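(* Let $V(x,t)$ admit a saddle (local maximum) at $x^\star(t)$ for all times considered, and let $\hat x^{\det}_t$ be the adiabatic solution of $\varepsilon\dot x=-\partial_xV(x,t)$ tracking $x^\star(t)$ at distance $O(\varepsilon)$. Let $\hat a(t)=-\partial_x^2V(\hat x^{\det}_t,t)$ and assume $\hat a(t)\ge a_0>0$. Consider $dx_t=-\frac1\varepsilon\partial_xV(x_t,t)dt+\frac{\sigma}{\sqrt\varepsilon}g(t)dW_t$ and define $$\mathcal B(h)=\Bigl\{(x,t):|x-\hat x^{\det}_t|<\frac{h\,\sigma\,g(t)}{\sqrt{2\hat a(t)}}\Bigr\}.$$ Assume $g(t)\ge L\varepsilon$ for all $t$, for a sufficiently large constant $L$. Then there are positive constants $C,\kappa$ such that for all $h\le1$, all initial conditions with $(x_0,0)\in\mathcal B(h)$, and all $t>0$, $$\mathbb P^{0,x_0}\{\tau_{\mathcal B(h)}>t\}\le C\exp\Bigl\{-\frac{\kappa}{h^2}\,\frac1\varepsilon\int_0^t\hat a(s)\,ds\Bigr\},$$ where $\tau_{\mathcal B(h)}$ is the first-exit time of $(x_s,s)$ from $\mathcal B(h)$.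
   Context: $W_t$ standard Brownian motion, $\varepsilon,\sigma>0$ small, $V$ and $g$ smooth and bounded as appropriate. *)

theory Defs
  imports "HOL-Probability.Probability"
begin

definition brownian_motion :: "'a measure \<Rightarrow> (real \<Rightarrow> 'a \<Rightarrow> real) \<Rightarrow> bool" where
  "brownian_motion M W \<longleftrightarrow>
     prob_space M \<and>
     (\<forall>t\<ge>0. W t \<in> borel_measurable M) \<and>
     (\<forall>\<omega>\<in>space M. W 0 \<omega> = 0 \<and> continuous_on {0..} (\<lambda>t. W t \<omega>)) \<and>
     (\<forall>s t. 0 \<le> s \<and> s < t \<longrightarrow>
        distributed M lborel (\<lambda>\<omega>. W t \<omega> - W s \<omega>)
          (\<lambda>y. ennreal (normal_density 0 (sqrt (t - s)) y))) \<and>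
     (\<forall>(n::nat) (ts::nat \<Rightarrow> real). (\<forall>i<n. 0 \<le> ts i \<and> ts i < ts (Suc i)) \<longrightarrow>
        prob_space.indep_vars M (\<lambda>_. borel)
          (\<lambda>i \<omega>. W (ts (Suc i)) \<omega> - W (ts i) \<omega>) {..<n})"

text \<open>Wiener integral int_0^t g(s) dW_s of a deterministic C^1 integrand g with
  derivative g', defined pathwise by integration by parts (W 0 = 0).\<close>
definition wiener_integral ::
    "(real \<Rightarrow> real) \<Rightarrow> (real \<Rightarrow> real) \<Rightarrow> (real \<Rightarrow> 'a \<Rightarrow> real) \<Rightarrow> real \<Rightarrow> 'a \<Rightarrow> real" where
  "wiener_integral g g' W t \<omega> = g t * W t \<omega> - integral {0..t} (\<lambda>s. g' s * W s \<omega>)"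

definition sde_solution ::
    "'a measure \<Rightarrow> (real \<Rightarrow> 'a \<Rightarrow> real) \<Rightarrow> (real \<Rightarrow> real \<Rightarrow> real) \<Rightarrow> (real \<Rightarrow> real) \<Rightarrow>
     (real \<Rightarrow> real) \<Rightarrow> real \<Rightarrow> real \<Rightarrow> real \<Rightarrow> (real \<Rightarrow> 'a \<Rightarrow> real) \<Rightarrow> bool" where
  "sde_solution M W Vx g g' \<epsilon> \<sigma> x0 X \<longleftrightarrow>
     (\<forall>t\<ge>0. X t \<in> borel_measurable M) \<and>
     (\<forall>\<omega>\<in>space M. continuous_on {0..} (\<lambda>t. X t \<omega>) \<and>
        (\<forall>t\<ge>0. X t \<omega> = x0 - (1/\<epsilon>) * integral {0..t} (\<lambda>s. Vx (X s \<omega>) s)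
                          + (\<sigma> / sqrt \<epsilon>) * wiener_integral g g' W t \<omega>))"

definition strip_B ::
    "(real \<Rightarrow> real) \<Rightarrow> (real \<Rightarrow> real) \<Rightarrow> (real \<Rightarrow> real) \<Rightarrow> real \<Rightarrow> real \<Rightarrow> (real \<times> real) set" where
  "strip_B xhat ahat g \<sigma> h = {(x, t). \<bar>x - xhat t\<bar> < h * \<sigma> * g t / sqrt (2 * ahat t)}"

text \<open>The event {tau_B > t}: the path (X s, s) has not left B on [0,t].\<close>
definition not_exited_by ::
    "'a measure \<Rightarrow> (real \<Rightarrow> 'a \<Rightarrow> real) \<Rightarrow> (real \<times> real) set \<Rightarrow> real \<Rightarrow> 'a set" where
  "not_exited_by M X B t = {\<omega> \<in> space M. \<forall>s\<in>{0..t}. (X s \<omega>, s) \<in> B}"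

end

theory Submission
  imports Defs
begin

(* Cut [0, t] into n = floor (t / (h^2 eps)) intervals of length h^2 eps. On each of them the
   equation of motion, compared with the deterministic ODE for xhat, expresses the Wiener
   integral of g over the interval as the change of x - xhat plus eps^-1 times the integrated
   drift difference. For a path staying in B(h) both are O(h sigma g), and since g varies by a
   factor of at most 3/2 over the interval (this is where g >= L eps enters), the Brownian
   increment itself is at most K h sqrt eps. Increments over disjoint intervals are independent
   N(0, h^2 eps) variables, each that small with probability at most 1 - p, so
   P(tau > t) <= (1 - p)^n <= e * exp (- p t / (h^2 eps)); bounding ahat by sup |Vxx| turns t
   into the integral of ahat. *)

(* The standard normal mass of (c, c + 1] is at least this, so it bounds P(|Z| > c) from below. *)
definition normal_tail_lower_bound :: "real \<Rightarrow> real" where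
  "normal_tail_lower_bound c = exp (- ((c + 1)\<^sup>2) / 2) / sqrt (2 * pi)"

lemma normal_tail_lower_bound_pos: "0 < normal_tail_lower_bound c"
  by (simp add: normal_tail_lower_bound_def)

lemma normal_tail_lower_bound_le_one: "normal_tail_lower_bound c \<le> 1"
proof -
  have "exp (- ((c + 1)\<^sup>2) / 2) \<le> 1" by simp
  also have "1 \<le> sqrt (2 * pi)" using pi_gt3 by simp
  finally show ?thesis by (simp add: normal_tail_lower_bound_def)
qed

lemma normal_density_ge_tail_lower_bound:
  assumes sd: "0 < sd" and "0 \<le> c" and y: "c * sd < y" "y \<le> (c + 1) * sd"
  shows "normal_tail_lower_bound c / sd \<le> normal_density 0 sd y"
proof -
  have "0 \<le> y" using y(1) \<open>0 \<le> c\<close> sd by (smt (verit) mult_nonneg_nonneg)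
  then have "y\<^sup>2 \<le> ((c + 1) * sd)\<^sup>2" using y(2) by (intro power_mono) auto
  then have "y\<^sup>2 \<le> sd\<^sup>2 * (c + 1)\<^sup>2" by (simp add: power_mult_distrib mult.commute)
  then have "- ((c + 1)\<^sup>2) / 2 \<le> - (y\<^sup>2) / (2 * sd\<^sup>2)"
    using sd by (simp add: field_simps)
  then have "exp (- ((c + 1)\<^sup>2) / 2) \<le> exp (- (y\<^sup>2) / (2 * sd\<^sup>2))" by simp
  then have "exp (- ((c + 1)\<^sup>2) / 2) / sqrt (2 * pi * sd\<^sup>2)
      \<le> exp (- (y\<^sup>2) / (2 * sd\<^sup>2)) / sqrt (2 * pi * sd\<^sup>2)"
    by (rule divide_right_mono) simp
  moreover have "sqrt (2 * pi * sd\<^sup>2) = sd * sqrt (2 * pi)"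
    using sd by (simp add: real_sqrt_mult)
  ultimately show ?thesis
    by (simp add: normal_tail_lower_bound_def normal_density_def mult.commute)
qed

lemma (in prob_space) prob_abs_normal_le:
  assumes X: "distributed M lborel X (\<lambda>y. ennreal (normal_density 0 sd y))"
    and sd: "0 < sd" and c: "0 \<le> c"
  shows "prob {\<omega> \<in> space M. \<bar>X \<omega>\<bar> \<le> c * sd} \<le> 1 - normal_tail_lower_bound c"
proof -
  define p where "p = normal_tail_lower_bound c"
  define I where "I = {c * sd<..(c + 1) * sd}"
  have X_meas: "X \<in> borel_measurable M" using X by (simp add: distributed_def)
  have "ennreal p = (\<integral>\<^sup>+y. ennreal (p / sd) * indicator I y \<partial>lborel)"
    using sd c
    by (simp add: I_def nn_integral_cmult_indicator ennreal_mult'[symmetric] algebra_simps)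
  also have "\<dots> \<le> (\<integral>\<^sup>+y. ennreal (normal_density 0 sd y) * indicator I y \<partial>lborel)"
    using normal_density_ge_tail_lower_bound[OF sd c]
    by (intro nn_integral_mono) (auto simp: I_def p_def indicator_def ennreal_leI)
  also have "\<dots> = emeasure M (X -` I \<inter> space M)"
    using distributed_emeasure[OF X] by (simp add: I_def)
  finally have tail: "p \<le> prob (X -` I \<inter> space M)"
    by (simp add: emeasure_eq_measure)
  have "prob {\<omega> \<in> space M. \<bar>X \<omega>\<bar> \<le> c * sd} + prob (X -` I \<inter> space M)
      = prob ({\<omega> \<in> space M. \<bar>X \<omega>\<bar> \<le> c * sd} \<union> (X -` I \<inter> space M))"
    using X_meas by (intro finite_measure_Union[symmetric]) (auto simp: I_def)
  also have "\<dots> \<le> 1" by simp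
  finally show ?thesis using tail unfolding p_def by simp
qed

lemma prob_brownian_increments_le:
  assumes W: "brownian_motion M W" and \<Delta>: "0 < \<Delta>" and c: "0 \<le> c"
  shows "measure M {\<omega> \<in> space M. \<forall>i<n. \<bar>W (real (Suc i) * \<Delta>) \<omega> - W (real i * \<Delta>) \<omega>\<bar> \<le> c * sqrt \<Delta>}
    \<le> (1 - normal_tail_lower_bound c) ^ n"
proof -
  interpret prob_space M using W by (simp add: brownian_motion_def)
  define Inc where "Inc i \<omega> = W (real (Suc i) * \<Delta>) \<omega> - W (real i * \<Delta>) \<omega>" for i \<omega>
  define S where "S = {y. \<bar>y\<bar> \<le> c * sqrt \<Delta>}"
  have bm_indep: "\<And>n ts. (\<forall>i<n. 0 \<le> ts i \<and> ts i < ts (Suc i)) \<Longrightarrow>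
      indep_vars (\<lambda>_. borel) (\<lambda>i \<omega>. W (ts (Suc i)) \<omega> - W (ts i) \<omega>) {..<n}"
    using W by (simp add: brownian_motion_def)
  have grid: "0 \<le> real i * \<Delta> \<and> real i * \<Delta> < real (Suc i) * \<Delta>" for i
    using \<Delta> by (simp add: distrib_right)
  have "distributed M lborel (Inc i)
      (\<lambda>y. ennreal (normal_density 0 (sqrt (real (Suc i) * \<Delta> - real i * \<Delta>)) y))" for i
    using W grid[of i] unfolding brownian_motion_def Inc_def by blast
  moreover have "real (Suc i) * \<Delta> - real i * \<Delta> = \<Delta>" for i by (simp add: algebra_simps)
  ultimately have "distributed M lborel (Inc i) (\<lambda>y. ennreal (normal_density 0 (sqrt \<Delta>) y))" for i
    by simp
  then have increment: "prob (Inc i -` S \<inter> space M) \<le> 1 - normal_tail_lower_bound c" for i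
    using prob_abs_normal_le[of "Inc i" "sqrt \<Delta>" c] \<Delta> c
    by (simp add: S_def vimage_def Int_def conj_commute)
  show ?thesis
  proof (cases "n = 0")
    case False
    have indep: "indep_vars (\<lambda>_. borel) Inc {..<n}"
      using bm_indep[of n "\<lambda>i. real i * \<Delta>"] grid unfolding Inc_def by simp
    have "{\<omega> \<in> space M. \<forall>i<n. \<bar>Inc i \<omega>\<bar> \<le> c * sqrt \<Delta>} = (\<Inter>i\<in>{..<n}. Inc i -` S \<inter> space M)"
      using False by (auto simp: S_def)
    also have "prob \<dots> = (\<Prod>i<n. prob (Inc i -` S \<inter> space M))"
      using False by (intro indep_varsD_finite[OF indep]) (auto simp: S_def)
    also have "\<dots> \<le> (\<Prod>i<n. 1 - normal_tail_lower_bound c)"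
      using increment by (intro prod_mono) auto
    finally show ?thesis by (simp add: Inc_def)
  qed simp
qed

lemma lipschitz_on_UNIV_of_deriv_bound:
  fixes f f' :: "real \<Rightarrow> real"
  assumes "\<And>x. (f has_real_derivative f' x) (at x)" and "\<And>x. \<bar>f' x\<bar> \<le> B"
  shows "B-lipschitz_on UNIV f"
proof (rule lipschitz_onI)
  show "0 \<le> B" using assms(2)[of 0] by linarith
  fix x y :: real
  show "dist (f x) (f y) \<le> B * dist x y"
    using field_differentiable_bound[of UNIV f f' B x y] assms by (simp add: dist_real_def)
qed

lemma continuous_on_compose_pair:
  fixes F :: "real \<Rightarrow> real \<Rightarrow> real"
  assumes "continuous_on UNIV (\<lambda>(y, t). F y t)" and "continuous_on S f"
  shows "continuous_on S (\<lambda>u. F (f u) u)"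
  using continuous_on_compose2[OF assms(1) continuous_on_Pair[OF assms(2) continuous_on_id]]
  by simp

lemma integral_equation_increment:
  fixes x xh N :: "real \<Rightarrow> real" and F :: "real \<Rightarrow> real \<Rightarrow> real"
  assumes contF: "continuous_on UNIV (\<lambda>(y, t). F y t)" and x: "continuous_on {0..} x"
    and xeq: "\<And>r. 0 \<le> r \<Longrightarrow> x r = x0 - (1/\<epsilon>) * integral {0..r} (\<lambda>u. F (x u) u) + N r"
    and xh: "\<And>r. 0 \<le> r \<Longrightarrow> (xh has_real_derivative - (1/\<epsilon>) * F (xh r) r) (at r within {0..})"
    and \<epsilon>: "\<epsilon> \<noteq> 0" and a: "0 \<le> a" "a \<le> s"
  shows "N s - N a = (x s - xh s) - (x a - xh a)
                     + (1/\<epsilon>) * integral {a..s} (\<lambda>u. F (x u) u - F (xh u) u)"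
proof -
  have "continuous_on {0..s} (\<lambda>u. F (x u) u)"
    using continuous_on_subset[OF x] by (intro continuous_on_compose_pair[OF contF]) auto
  then have Fx: "(\<lambda>u. F (x u) u) integrable_on {0..s}"
    by (rule integrable_continuous_interval)
  have "(xh has_real_derivative - (1/\<epsilon>) * F (xh u) u) (at u within {a..s})" if "u \<in> {a..s}" for u
    using DERIV_subset[OF xh] that a by auto
  then have "((\<lambda>u. - (1/\<epsilon>) * F (xh u) u) has_integral (xh s - xh a)) {a..s}"
    using a by (intro fundamental_theorem_of_calculus)
      (auto simp: has_real_derivative_iff_has_vector_derivative[symmetric])
  from has_integral_mult_right[OF this, of "- \<epsilon>"]
  have Fxh: "((\<lambda>u. F (xh u) u) has_integral - \<epsilon> * (xh s - xh a)) {a..s}"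
    using \<epsilon> by simp
  have "integral {0..s} (\<lambda>u. F (x u) u)
      = integral {0..a} (\<lambda>u. F (x u) u) + integral {a..s} (\<lambda>u. F (x u) u)"
    using Henstock_Kurzweil_Integration.integral_combine[OF a Fx] by simp
  moreover have "(1/\<epsilon>) * integral {a..s} (\<lambda>u. F (x u) u - F (xh u) u)
      = (1/\<epsilon>) * integral {a..s} (\<lambda>u. F (x u) u) + (xh s - xh a)"
    using Henstock_Kurzweil_Integration.integral_diff[OF integrable_on_subinterval[OF Fx]
        has_integral_integrable[OF Fxh]] integral_unique[OF Fxh] a \<epsilon>
    by (simp add: field_simps)
  ultimately show ?thesis
    using xeq[of s] xeq[of a] a \<epsilon> by (simp add: algebra_simps)
qed

lemma integration_by_parts_increment:
  fixes g g' w :: "real \<Rightarrow> real"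
  assumes dg: "\<And>t. (g has_real_derivative g' t) (at t)"
    and g': "continuous_on {0..s} g'" and w: "continuous_on {0..s} w" and a: "0 \<le> a" "a \<le> s"
  shows "(g s * w s - integral {0..s} (\<lambda>u. g' u * w u))
           - (g a * w a - integral {0..a} (\<lambda>u. g' u * w u))
         = g s * (w s - w a) - integral {a..s} (\<lambda>u. g' u * (w u - w a))"
proof -
  have gw: "(\<lambda>u. g' u * w u) integrable_on {0..s}"
    using g' w by (intro integrable_continuous_interval continuous_intros)
  have "((\<lambda>u. w a * g' u) has_integral w a * (g s - g a)) {a..s}"
    using a dg by (intro has_integral_mult_right fundamental_theorem_of_calculus)
      (auto simp: has_real_derivative_iff_has_vector_derivative[symmetric] intro: DERIV_subset)
  then have "integral {a..s} (\<lambda>u. g' u * w u - w a * g' u)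
      = integral {a..s} (\<lambda>u. g' u * w u) - w a * (g s - g a)"
    using Henstock_Kurzweil_Integration.integral_diff[OF integrable_on_subinterval[OF gw]
        has_integral_integrable] a
    by (simp add: integral_unique)
  moreover have "(\<lambda>u. g' u * (w u - w a)) = (\<lambda>u. g' u * w u - w a * g' u)"
    by (simp add: algebra_simps)
  moreover have "integral {0..s} (\<lambda>u. g' u * w u)
      = integral {0..a} (\<lambda>u. g' u * w u) + integral {a..s} (\<lambda>u. g' u * w u)"
    using Henstock_Kurzweil_Integration.integral_combine[OF a gw] by simp
  ultimately show ?thesis by (simp add: algebra_simps)
qed

(* For B a = 0, g s * B s - integral {a..s} (g' * B) is the Stieltjes integral of g against B;
   the hypothesis is used at a maximiser of |B|. *)
lemma abs_le_of_stieltjes_bound: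
  fixes B g g' :: "real \<Rightarrow> real"
  assumes ab: "a \<le> b" and B: "continuous_on {a..b} B" and g': "continuous_on {a..b} g'"
    and g'_le: "\<And>r. r \<in> {a..b} \<Longrightarrow> \<bar>g' r\<bar> \<le> G1" and g_pos: "\<And>s. s \<in> {a..b} \<Longrightarrow> 0 < g s"
    and small: "\<And>s. s \<in> {a..b} \<Longrightarrow> G1 * (b - a) \<le> g s / 2"
    and bound: "\<And>s. s \<in> {a..b} \<Longrightarrow> \<bar>g s * B s - integral {a..s} (\<lambda>r. g' r * B r)\<bar> \<le> T * g s"
  shows "\<bar>B b\<bar> \<le> 2 * T"
proof -
  have "continuous_on {a..b} (\<lambda>r. \<bar>B r\<bar>)" using B by (intro continuous_intros)
  then obtain s where s: "s \<in> {a..b}" and max: "\<And>r. r \<in> {a..b} \<Longrightarrow> \<bar>B r\<bar> \<le> \<bar>B s\<bar>"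
    using continuous_attains_sup[of "{a..b}" "\<lambda>r. \<bar>B r\<bar>"] ab by auto
  have G1: "0 \<le> G1" using g'_le[of a] ab by auto
  have "norm (integral {a..s} (\<lambda>r. g' r * B r)) \<le> G1 * \<bar>B s\<bar> * (s - a)"
  proof (rule integral_bound)
    show "a \<le> s" using s by simp
    show "continuous_on {a..s} (\<lambda>r. g' r * B r)"
      using s
      by (intro continuous_intros continuous_on_subset[OF B] continuous_on_subset[OF g']) auto
    show "norm (g' r * B r) \<le> G1 * \<bar>B s\<bar>" if "r \<in> {a..s}" for r
      using that s max g'_le G1 by (auto simp: abs_mult intro!: mult_mono)
  qed
  also have "\<dots> \<le> G1 * (b - a) * \<bar>B s\<bar>"
    using s G1 by (simp add: mult_left_mono mult.commute mult.left_commute)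
  also have "\<dots> \<le> g s / 2 * \<bar>B s\<bar>"
    using mult_right_mono[OF small[OF s] abs_ge_zero] by simp
  finally have "g s * \<bar>B s\<bar> \<le> T * g s + g s / 2 * \<bar>B s\<bar>"
    using bound[OF s] g_pos[OF s] by (simp add: abs_mult)
  then have "\<bar>B s\<bar> \<le> 2 * T"
    using g_pos[OF s] by (simp add: field_simps)
  then show ?thesis using max[of b] ab by auto
qed

lemma noise_increment_le_of_tracking:
  fixes x xh w g g' :: "real \<Rightarrow> real" and F :: "real \<Rightarrow> real \<Rightarrow> real"
  assumes F_lip: "\<And>t. Mx-lipschitz_on UNIV (\<lambda>y. F y t)"
    and contF: "continuous_on UNIV (\<lambda>(y, t). F y t)"
    and x: "continuous_on {0..} x" and w: "continuous_on {0..} w"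
    and dg: "\<And>t. (g has_real_derivative g' t) (at t)" and g': "continuous_on UNIV g'"
    and xeq: "\<And>r. 0 \<le> r \<Longrightarrow> x r = x0 - (1/\<epsilon>) * integral {0..r} (\<lambda>u. F (x u) u)
                                   + c * (g r * w r - integral {0..r} (\<lambda>u. g' u * w u))"
    and xh: "\<And>r. 0 \<le> r \<Longrightarrow> (xh has_real_derivative - (1/\<epsilon>) * F (xh r) r) (at r within {0..})"
    and \<epsilon>: "0 < \<epsilon>" and c: "0 \<le> c" and a: "0 \<le> a" "a \<le> s" and short: "s - a \<le> \<epsilon>"
    and near: "\<And>r. r \<in> {a..s} \<Longrightarrow> \<bar>x r - xh r\<bar> \<le> Y"
  shows "c * \<bar>g s * (w s - w a) - integral {a..s} (\<lambda>u. g' u * (w u - w a))\<bar> \<le> (2 + Mx) * Y"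
proof -
  define D where "D = integral {a..s} (\<lambda>u. F (x u) u - F (xh u) u)"
  have "c * (g s * (w s - w a) - integral {a..s} (\<lambda>u. g' u * (w u - w a)))
      = c * (g s * w s - integral {0..s} (\<lambda>u. g' u * w u))
        - c * (g a * w a - integral {0..a} (\<lambda>u. g' u * w u))"
    using a by (subst integration_by_parts_increment[OF dg, symmetric])
      (auto intro: continuous_on_subset[OF g'] continuous_on_subset[OF w] simp: right_diff_distrib)
  also have "\<dots> = (x s - xh s) - (x a - xh a) + (1/\<epsilon>) * D"
    unfolding D_def using integral_equation_increment[OF contF x xeq xh _ a] \<epsilon> by simp
  finally have identity: "c * (g s * (w s - w a) - integral {a..s} (\<lambda>u. g' u * (w u - w a)))
      = (x s - xh s) - (x a - xh a) + (1/\<epsilon>) * D" .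
  have "\<bar>D\<bar> \<le> Mx * Y * \<epsilon>"
  proof -
    have "continuous_on {0..} xh" by (rule DERIV_continuous_on[OF xh]) auto
    then have "continuous_on {a..s} (\<lambda>u. F (x u) u - F (xh u) u)"
      using a continuous_on_subset[OF x] continuous_on_subset[of "{0..}" xh]
      by (intro continuous_intros continuous_on_compose_pair[OF contF]) auto
    moreover have "\<bar>F (x u) u - F (xh u) u\<bar> \<le> Mx * Y" if "u \<in> {a..s}" for u
      using lipschitz_onD[OF F_lip, of "x u" "xh u"] near[OF that] lipschitz_on_nonneg[OF F_lip]
      by (auto simp: dist_real_def intro: order_trans mult_left_mono)
    ultimately have "\<bar>D\<bar> \<le> Mx * Y * (s - a)"
      using integral_bound[OF a(2), where f = "\<lambda>u. F (x u) u - F (xh u) u" and B = "Mx * Y"]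
      unfolding D_def by simp
    also have "\<dots> \<le> Mx * Y * \<epsilon>"
      using short near[of s] a lipschitz_on_nonneg[OF F_lip] by (intro mult_left_mono) auto
    finally show ?thesis .
  qed
  then have "\<bar>(1/\<epsilon>) * D\<bar> \<le> Mx * Y" using \<epsilon> by (simp add: abs_mult field_simps)
  moreover have "\<bar>x s - xh s\<bar> \<le> Y" "\<bar>x a - xh a\<bar> \<le> Y" using near a by auto
  ultimately have "\<bar>c * (g s * (w s - w a) - integral {a..s} (\<lambda>u. g' u * (w u - w a)))\<bar>
      \<le> (2 + Mx) * Y"
    unfolding identity distrib_right by linarith
  then show ?thesis using c by (simp add: abs_mult)
qed

lemma abs_increment_le_of_tracking:
  fixes x xh w g g' :: "real \<Rightarrow> real" and F :: "real \<Rightarrow> real \<Rightarrow> real"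
  assumes F_lip: "\<And>t. Mx-lipschitz_on UNIV (\<lambda>y. F y t)"
    and contF: "continuous_on UNIV (\<lambda>(y, t). F y t)"
    and x: "continuous_on {0..} x" and w: "continuous_on {0..} w"
    and dg: "\<And>t. (g has_real_derivative g' t) (at t)" and g': "continuous_on UNIV g'"
    and g'_le: "\<And>t. \<bar>g' t\<bar> \<le> G1" and g_large: "\<And>t. 2 * G1 * \<epsilon> \<le> g t" and g_pos: "\<And>t. 0 < g t"
    and xeq: "\<And>r. 0 \<le> r \<Longrightarrow> x r = x0 - (1/\<epsilon>) * integral {0..r} (\<lambda>u. F (x u) u)
                                   + c * (g r * w r - integral {0..r} (\<lambda>u. g' u * w u))"
    and xh: "\<And>r. 0 \<le> r \<Longrightarrow> (xh has_real_derivative - (1/\<epsilon>) * F (xh r) r) (at r within {0..})"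
    and \<epsilon>: "0 < \<epsilon>" and c: "0 < c" and a: "0 \<le> a" "a \<le> b" and short: "b - a \<le> \<epsilon>"
    and near: "\<And>r. r \<in> {a..b} \<Longrightarrow> \<bar>x r - xh r\<bar> \<le> \<rho> * g r"
  shows "\<bar>w b - w a\<bar> \<le> 3 * (2 + Mx) * \<rho> / c"
proof -
  define T where "T = 3/2 * (2 + Mx) * \<rho> / c"
  have "0 \<le> G1" using g'_le[of 0] by linarith
  then have small: "G1 * (b - a) \<le> g s / 2" for s
    using mult_left_mono[OF short \<open>0 \<le> G1\<close>] g_large[of s] by linarith
  have g_ratio: "g r \<le> 3/2 * g s" if "r \<in> {a..b}" "s \<in> {a..b}" for r s
  proof -
    have "dist (g r) (g s) \<le> G1 * dist r s"
      using lipschitz_on_UNIV_of_deriv_bound[OF dg g'_le] by (rule lipschitz_onD) auto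
    also have "\<dots> \<le> G1 * (b - a)"
      using that \<open>0 \<le> G1\<close> by (intro mult_left_mono) (auto simp: dist_real_def)
    finally show ?thesis using small[of s] by (simp add: dist_real_def)
  qed
  have "0 \<le> \<rho> * g a" using near[of a] a by auto
  then have "0 \<le> \<rho>" using g_pos[of a] by (simp add: zero_le_mult_iff)
  have "\<bar>g s * (w s - w a) - integral {a..s} (\<lambda>u. g' u * (w u - w a))\<bar> \<le> T * g s"
    if s: "s \<in> {a..b}" for s
  proof -
    have "\<bar>x r - xh r\<bar> \<le> \<rho> * (3/2 * g s)" if "r \<in> {a..s}" for r
    proof -
      have "\<rho> * g r \<le> \<rho> * (3/2 * g s)"
        using g_ratio[of r s] that s \<open>0 \<le> \<rho>\<close> by (intro mult_left_mono) auto
      then show ?thesis using near[of r] that s by auto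
    qed
    then have "c * \<bar>g s * (w s - w a) - integral {a..s} (\<lambda>u. g' u * (w u - w a))\<bar>
        \<le> (2 + Mx) * (\<rho> * (3/2 * g s))"
      using s short c a
      by (intro noise_increment_le_of_tracking[OF F_lip contF x w dg g' xeq xh \<epsilon>]) auto
    then show ?thesis using c by (simp add: T_def field_simps)
  qed
  then have "\<bar>w b - w a\<bar> \<le> 2 * T"
    using a g'_le g_pos small continuous_on_subset[OF w] continuous_on_subset[OF g']
    by (intro abs_le_of_stieltjes_bound[where B = "\<lambda>r. w r - w a" and g = g and g' = g'])
      (auto intro!: continuous_intros)
  then show ?thesis by (simp add: T_def)
qed

lemma one_minus_pow_floor_le_exp:
  fixes p \<Delta> t :: real
  assumes p: "0 \<le> p" "p \<le> 1" and \<Delta>: "0 < \<Delta>" and t: "0 \<le> t"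
  shows "(1 - p) ^ nat \<lfloor>t / \<Delta>\<rfloor> \<le> exp 1 * exp (- p * t / \<Delta>)"
proof -
  define n where "n = nat \<lfloor>t / \<Delta>\<rfloor>"
  have "t / \<Delta> - 1 < real n" unfolding n_def using t \<Delta> by linarith
  have "(1 - p) ^ n \<le> exp (- p) ^ n"
    using p by (intro power_mono) (auto simp: exp_ge_add_one_self[of "- p", simplified])
  also have "\<dots> = exp (- p * real n)" by (simp add: exp_of_nat_mult[symmetric] mult.commute)
  also have "\<dots> \<le> exp (1 - p * t / \<Delta>)"
    using mult_left_mono[OF less_imp_le[OF \<open>t / \<Delta> - 1 < real n\<close>] p(1)] p(2)
    by (simp add: algebra_simps)
  also have "\<dots> = exp 1 * exp (- p * t / \<Delta>)" by (simp add: exp_diff exp_minus field_simps)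
  finally show ?thesis unfolding n_def .
qed

lemma integral_le_const_times_length:
  fixes f :: "real \<Rightarrow> real"
  assumes "\<And>s. s \<in> {0..t} \<Longrightarrow> f s \<le> A" and "0 \<le> A" "0 \<le> t"
  shows "integral {0..t} f \<le> A * t"
proof (cases "f integrable_on {0..t}")
  case True
  then have "integral {0..t} f \<le> integral {0..t} (\<lambda>_. A)"
    using assms(1) by (intro integral_le) auto
  then show ?thesis using assms(3) by (simp add: mult.commute)
next
  case False
  then show ?thesis using assms(2,3) by (simp add: not_integrable_integral)
qed

lemma not_exited_subset_small_increments:
  fixes F :: "real \<Rightarrow> real \<Rightarrow> real" and xh ahat g g' :: "real \<Rightarrow> real"
  assumes W: "brownian_motion M W" and X: "sde_solution M W F g g' \<epsilon> \<sigma> x0 X"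
    and F_lip: "\<And>t. Mx-lipschitz_on UNIV (\<lambda>y. F y t)"
    and contF: "continuous_on UNIV (\<lambda>(y, t). F y t)"
    and dg: "\<And>t. (g has_real_derivative g' t) (at t)" and g': "continuous_on UNIV g'"
    and g'_le: "\<And>t. \<bar>g' t\<bar> \<le> G1" and g_large: "\<And>t. 2 * G1 * \<epsilon> \<le> g t" and g_pos: "\<And>t. 0 < g t"
    and xh: "\<And>r. 0 \<le> r \<Longrightarrow> (xh has_real_derivative - (1/\<epsilon>) * F (xh r) r) (at r within {0..})"
    and ahat: "\<And>s. 0 \<le> s \<Longrightarrow> a0 \<le> ahat s" and a0: "0 < a0"
    and \<epsilon>: "0 < \<epsilon>" and \<sigma>: "0 < \<sigma>" and h: "0 < h" "h \<le> 1"
  defines "\<Delta> \<equiv> h\<^sup>2 * \<epsilon>"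
  shows "not_exited_by M X (strip_B xh ahat g \<sigma> h) t
    \<subseteq> {\<omega> \<in> space M. \<forall>i < nat \<lfloor>t / \<Delta>\<rfloor>.
         \<bar>W (real (Suc i) * \<Delta>) \<omega> - W (real i * \<Delta>) \<omega>\<bar> \<le> 3 * (2 + Mx) / sqrt (2 * a0) * sqrt \<Delta>}"
proof
  fix \<omega> assume \<omega>: "\<omega> \<in> not_exited_by M X (strip_B xh ahat g \<sigma> h) t"
  then have "\<omega> \<in> space M" by (simp add: not_exited_by_def)
  have \<Delta>: "0 < \<Delta>" "\<Delta> \<le> \<epsilon>" "sqrt \<Delta> = h * sqrt \<epsilon>"
    using h \<epsilon> by (auto simp: \<Delta>_def power_le_one real_sqrt_mult intro: mult_left_le_one_le)
  have w: "continuous_on {0..} (\<lambda>r. W r \<omega>)"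
    using W \<open>\<omega> \<in> space M\<close> by (simp add: brownian_motion_def)
  have x: "continuous_on {0..} (\<lambda>r. X r \<omega>)"
    using X \<open>\<omega> \<in> space M\<close> by (simp add: sde_solution_def)
  have xeq: "X r \<omega> = x0 - (1/\<epsilon>) * integral {0..r} (\<lambda>u. F (X u \<omega>) u)
      + \<sigma> / sqrt \<epsilon> * (g r * W r \<omega> - integral {0..r} (\<lambda>u. g' u * W u \<omega>))" if "0 \<le> r" for r
    using X \<open>\<omega> \<in> space M\<close> that by (simp add: sde_solution_def wiener_integral_def)
  define \<rho> where "\<rho> = h * \<sigma> / sqrt (2 * a0)"
  have "\<bar>W (real (Suc i) * \<Delta>) \<omega> - W (real i * \<Delta>) \<omega>\<bar> \<le> 3 * (2 + Mx) / sqrt (2 * a0) * sqrt \<Delta>"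
    if i: "i < nat \<lfloor>t / \<Delta>\<rfloor>" for i
  proof -
    have "real (Suc i) \<le> t / \<Delta>" using i by linarith
    then have grid: "0 \<le> real i * \<Delta>" "real i * \<Delta> \<le> real (Suc i) * \<Delta>" "real (Suc i) * \<Delta> \<le> t"
      using \<Delta> by (auto simp: field_simps)
    have near: "\<bar>X r \<omega> - xh r\<bar> \<le> \<rho> * g r" if "r \<in> {real i * \<Delta>..real (Suc i) * \<Delta>}" for r
    proof -
      have "\<bar>X r \<omega> - xh r\<bar> < h * \<sigma> * g r / sqrt (2 * ahat r)"
        using \<omega> that grid by (auto simp: not_exited_by_def strip_B_def)
      also have "\<dots> \<le> h * \<sigma> * g r / sqrt (2 * a0)"
        using ahat[of r] that grid a0 h \<sigma> g_pos[of r] by (intro divide_left_mono) auto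
      finally show ?thesis by (simp add: \<rho>_def)
    qed
    have "\<bar>W (real (Suc i) * \<Delta>) \<omega> - W (real i * \<Delta>) \<omega>\<bar> \<le> 3 * (2 + Mx) * \<rho> / (\<sigma> / sqrt \<epsilon>)"
      using \<epsilon> \<sigma> \<Delta> grid
      by (intro abs_increment_le_of_tracking[OF F_lip contF x w dg g' g'_le g_large g_pos xeq xh
            \<epsilon> _ grid(1,2) _ near]) (auto simp: algebra_simps)
    also have "\<dots> = 3 * (2 + Mx) / sqrt (2 * a0) * sqrt \<Delta>"
      using \<sigma> \<epsilon> \<Delta>(3) by (simp add: \<rho>_def)
    finally show ?thesis .
  qed
  with \<open>\<omega> \<in> space M\<close> show "\<omega> \<in> {\<omega> \<in> space M. \<forall>i < nat \<lfloor>t / \<Delta>\<rfloor>.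
      \<bar>W (real (Suc i) * \<Delta>) \<omega> - W (real i * \<Delta>) \<omega>\<bar> \<le> 3 * (2 + Mx) / sqrt (2 * a0) * sqrt \<Delta>}"
    by blast
qed

lemma prob_not_exited_strip_le:
  fixes F :: "real \<Rightarrow> real \<Rightarrow> real" and xh ahat g g' :: "real \<Rightarrow> real"
  assumes W: "brownian_motion M W" and X: "sde_solution M W F g g' \<epsilon> \<sigma> x0 X"
    and F_lip: "\<And>t. Mx-lipschitz_on UNIV (\<lambda>y. F y t)"
    and contF: "continuous_on UNIV (\<lambda>(y, t). F y t)"
    and dg: "\<And>t. (g has_real_derivative g' t) (at t)" and g': "continuous_on UNIV g'"
    and g'_le: "\<And>t. \<bar>g' t\<bar> \<le> G1" and g_large: "\<And>t. 2 * G1 * \<epsilon> \<le> g t" and g_pos: "\<And>t. 0 < g t"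
    and xh: "\<And>r. 0 \<le> r \<Longrightarrow> (xh has_real_derivative - (1/\<epsilon>) * F (xh r) r) (at r within {0..})"
    and ahat_ge: "\<And>s. 0 \<le> s \<Longrightarrow> a0 \<le> ahat s" and ahat_le: "\<And>s. ahat s \<le> A1" and a0: "0 < a0"
    and \<epsilon>: "0 < \<epsilon>" and \<sigma>: "0 < \<sigma>" and h: "0 < h" "h \<le> 1" and t: "0 \<le> t"
  shows "measure M (not_exited_by M X (strip_B xh ahat g \<sigma> h) t)
    \<le> exp 1 * exp (- (normal_tail_lower_bound (3 * (2 + Mx) / sqrt (2 * a0)) / A1 / h\<^sup>2)
                    * (1/\<epsilon>) * integral {0..t} ahat)"
proof -
  interpret prob_space M using W by (simp add: brownian_motion_def)
  define K where "K = 3 * (2 + Mx) / sqrt (2 * a0)"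
  define p where "p = normal_tail_lower_bound K"
  define \<Delta> where "\<Delta> = h\<^sup>2 * \<epsilon>"
  define S where "S = {\<omega> \<in> space M. \<forall>i < nat \<lfloor>t / \<Delta>\<rfloor>.
      \<bar>W (real (Suc i) * \<Delta>) \<omega> - W (real i * \<Delta>) \<omega>\<bar> \<le> K * sqrt \<Delta>}"
  have \<Delta>: "0 < \<Delta>" using h \<epsilon> by (simp add: \<Delta>_def)
  have K: "0 \<le> K" using lipschitz_on_nonneg[OF F_lip] a0 by (simp add: K_def)
  have [measurable]: "W (real i * \<Delta>) \<in> borel_measurable M" for i
    using W \<Delta> by (simp add: brownian_motion_def)
  have "S \<in> sets M" unfolding S_def by measurable
  then have "measure M (not_exited_by M X (strip_B xh ahat g \<sigma> h) t) \<le> measure M S"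
    unfolding S_def K_def \<Delta>_def
    by (intro finite_measure_mono not_exited_subset_small_increments[OF W X F_lip contF dg g' g'_le
          g_large g_pos xh ahat_ge a0 \<epsilon> \<sigma> h])
  also have "\<dots> \<le> (1 - p) ^ nat \<lfloor>t / \<Delta>\<rfloor>"
    unfolding S_def p_def by (rule prob_brownian_increments_le[OF W \<Delta> K])
  also have "\<dots> \<le> exp 1 * exp (- p * t / \<Delta>)"
    using normal_tail_lower_bound_pos[of K] normal_tail_lower_bound_le_one[of K] \<Delta> t
    by (intro one_minus_pow_floor_le_exp) (auto simp: p_def)
  also have "\<dots> \<le> exp 1 * exp (- (p / A1 / h\<^sup>2) * (1/\<epsilon>) * integral {0..t} ahat)"
  proof -
    have A1: "0 < A1" using a0 ahat_ge[of 0] ahat_le[of 0] by linarith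
    have "integral {0..t} ahat \<le> A1 * t"
      using A1 t ahat_le by (intro integral_le_const_times_length) auto
    then have "p / A1 / h\<^sup>2 * (1/\<epsilon>) * integral {0..t} ahat \<le> p / A1 / h\<^sup>2 * (1/\<epsilon>) * (A1 * t)"
      using normal_tail_lower_bound_pos[of K] A1 h \<epsilon> by (intro mult_left_mono) (auto simp: p_def)
    also have "\<dots> = p * t / \<Delta>" using A1 by (simp add: \<Delta>_def)
    finally show ?thesis by simp
  qed
  finally show ?thesis by (simp add: p_def K_def)
qed

theorem theorem2p5:
  fixes V Vx Vxx Vxxx Vt :: "real \<Rightarrow> real \<Rightarrow> real"
    and xstar g g' :: "real \<Rightarrow> real"
    and xhat :: "real \<Rightarrow> real \<Rightarrow> real"
    and \<epsilon>0 a0 :: real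
  assumes dVx: "\<And>x t. ((\<lambda>y. V y t) has_real_derivative Vx x t) (at x)"
      and dVxx: "\<And>x t. ((\<lambda>y. Vx y t) has_real_derivative Vxx x t) (at x)"
      and dVxxx: "\<And>x t. ((\<lambda>y. Vxx y t) has_real_derivative Vxxx x t) (at x)"
      and dVt: "\<And>x t. ((\<lambda>s. V x s) has_real_derivative Vt x t) (at t)"
      and contV: "continuous_on UNIV (\<lambda>(x, t). Vx x t)"
                 "continuous_on UNIV (\<lambda>(x, t). Vxx x t)"
                 "continuous_on UNIV (\<lambda>(x, t). Vxxx x t)"
                 "continuous_on UNIV (\<lambda>(x, t). Vt x t)"
      and bddV: "bounded (range (\<lambda>(x, t). Vxx x t))"
                "bounded (range (\<lambda>(x, t). Vxxx x t))"
      and saddle: "\<And>t. t \<ge> 0 \<Longrightarrow> Vx (xstar t) t = 0 \<and> Vxx (xstar t) t < 0"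
      and dg: "\<And>t. (g has_real_derivative g' t) (at t)"
      and contg': "continuous_on UNIV g'"
      and bddg: "bounded (range g)" "bounded (range g')"
      and \<epsilon>0_pos: "\<epsilon>0 > 0"
      and adiabatic: "\<And>\<epsilon> t. 0 < \<epsilon> \<Longrightarrow> \<epsilon> \<le> \<epsilon>0 \<Longrightarrow> t \<ge> 0 \<Longrightarrow>
             (xhat \<epsilon> has_real_derivative (- (1/\<epsilon>) * Vx (xhat \<epsilon> t) t)) (at t within {0..})"
      and tracking: "\<exists>K. \<forall>\<epsilon> t. 0 < \<epsilon> \<and> \<epsilon> \<le> \<epsilon>0 \<and> t \<ge> 0 \<longrightarrow> \<bar>xhat \<epsilon> t - xstar t\<bar> \<le> K * \<epsilon>"
      and a0_pos: "a0 > 0"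
      and ahat_lower: "\<And>\<epsilon> t. 0 < \<epsilon> \<Longrightarrow> \<epsilon> \<le> \<epsilon>0 \<Longrightarrow> t \<ge> 0 \<Longrightarrow> - Vxx (xhat \<epsilon> t) t \<ge> a0"
  shows "\<exists>L C \<kappa> \<epsilon>1 \<sigma>1. L > 0 \<and> C > 0 \<and> \<kappa> > 0 \<and> 0 < \<epsilon>1 \<and> \<epsilon>1 \<le> \<epsilon>0 \<and> \<sigma>1 > 0 \<and>
    (\<forall>\<epsilon> \<sigma>. 0 < \<epsilon> \<and> \<epsilon> < \<epsilon>1 \<and> 0 < \<sigma> \<and> \<sigma> < \<sigma>1 \<and> (\<forall>t. g t \<ge> L * \<epsilon>) \<longrightarrow>
      (\<forall>(M :: 'a measure) W X x0 h t.
         brownian_motion M W \<and> sde_solution M W Vx g g' \<epsilon> \<sigma> x0 X \<and>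
         0 < h \<and> h \<le> 1 \<and> t > 0 \<and>
         (x0, 0) \<in> strip_B (xhat \<epsilon>) (\<lambda>s. - Vxx (xhat \<epsilon> s) s) g \<sigma> h \<longrightarrow>
         measure M (not_exited_by M X (strip_B (xhat \<epsilon>) (\<lambda>s. - Vxx (xhat \<epsilon> s) s) g \<sigma> h) t)
           \<le> C * exp (- (\<kappa> / h\<^sup>2) * (1/\<epsilon>) * integral {0..t} (\<lambda>s. - Vxx (xhat \<epsilon> s) s))))"
proof -
  obtain Mxx where Mxx: "\<And>x t. \<bar>Vxx x t\<bar> \<le> Mxx" and "0 < Mxx"
    using bddV(1) unfolding bounded_pos by (auto simp: case_prod_beta)
  obtain G1 where G1: "\<And>t. \<bar>g' t\<bar> \<le> G1" and "0 < G1"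
    using bddg(2) unfolding bounded_pos by auto
  define \<kappa> where "\<kappa> = normal_tail_lower_bound (3 * (2 + Mxx) / sqrt (2 * a0)) / Mxx"
  have Vx_lip: "Mxx-lipschitz_on UNIV (\<lambda>y. Vx y t)" for t
    using dVxx Mxx by (rule lipschitz_on_UNIV_of_deriv_bound)
  have main: "measure M (not_exited_by M X (strip_B (xhat \<epsilon>) (\<lambda>s. - Vxx (xhat \<epsilon> s) s) g \<sigma> h) t)
      \<le> exp 1 * exp (- (\<kappa> / h\<^sup>2) * (1/\<epsilon>) * integral {0..t} (\<lambda>s. - Vxx (xhat \<epsilon> s) s))"
    if \<epsilon>: "0 < \<epsilon>" "\<epsilon> < \<epsilon>0" and \<sigma>: "0 < \<sigma>" and g_large: "\<forall>t. 2 * G1 * \<epsilon> \<le> g t"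
      and W: "brownian_motion M W" and X: "sde_solution M W Vx g g' \<epsilon> \<sigma> x0 X"
      and h: "0 < h" "h \<le> 1" and t: "0 < t"
    for \<epsilon> \<sigma> and M :: "'a measure" and W X x0 h t
  proof -
    have "0 < g s" for s
      using g_large \<open>0 < G1\<close> \<epsilon> by (smt (verit) mult_pos_pos)
    moreover have "- Vxx y s \<le> Mxx" for y s
      using Mxx[of y s] by linarith
    ultimately show ?thesis
      unfolding \<kappa>_def using \<epsilon> g_large t
      by (intro prob_not_exited_strip_le[OF W X Vx_lip contV(1) dg contg' G1 _ _
            adiabatic[OF \<epsilon>(1)] ahat_lower[OF \<epsilon>(1)] _ a0_pos \<epsilon>(1) \<sigma> h]) auto
  qed
  have "0 < \<kappa>"
    using \<open>0 < Mxx\<close> normal_tail_lower_bound_pos unfolding \<kappa>_def by simp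
  show ?thesis
    by (rule exI[of _ "2 * G1"], rule exI[of _ "exp 1"], rule exI[of _ \<kappa>], rule exI[of _ \<epsilon>0],
        rule exI[of _ 1], safe intro!: main) (use \<open>0 < \<kappa>\<close> \<open>0 < G1\<close> \<epsilon>0_pos in simp_all)
qed

end
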